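(* Let $\sigma^2>0$. Consider the discrete-time memoryless channel with one-bit output quantization: for a Borel set $\mathcal{D}\subset\mathbb{R}$ (the quantization region), an input $x_k\in\mathbb{R}$ at time $k$ produces $\tilde Y_k=x_k+Z_k$ and output $Y_k=1$ if $\tilde Y_k\in\mathcal{D}$ and $Y_k=-1$ otherwise, where $Z_1,Z_2,\dots$ are i.i.d. Gaussian with mean $0$ and variance $\sigma^2$. Then the capacity per unit-energy of this channel (with the quantization region allowed to be optimized) is $$\dot C(0)=\frac{1}{2\sigma^2}.$$ Moreover, this value is achieved using threshold quantization regions: writing $P_{Y|X=x}^{\Upsilon}$ for the output distribution when the input is $x$ and $\mathcal{D}=\{\tilde y\in\mathbb{R}:\tilde y\ge \Upsilon\}$, i.e. $P(Y=1\mid X=x)=Q\bigl((\Upsilon-x)/\sigma\bigr)$, we have $$\sup_{\xi\neq 0,\ \Upsilon\in\mathbb{R}}\frac{D\bigl(P^{\Upsilon}_{Y|X=\xi}\,\big\|\,P^{\Upsilon}_{Y|X=0}\bigr)}{\xi^2}=\frac{1}{2\sigma^2}.$$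
   Context: $Q(x)=\frac{1}{\sqrt{2\pi}}\int_x^\infty e^{-t^2/2}\,dt$ is the Gaussian $Q$-function; $\log$ is the natural logarithm; $D(\cdot\|\cdot)$ is relative entropy. A message $M$ uniform on $\{1,\dots,\mathsf{M}\}$ is encoded into $x_1,\dots,x_n$ satisfying the energy constraint $\sum_{k=1}^n x_k^2\le \mathsf{E}$ for every message; the decoder sees $Y_1,\dots,Y_n$ and outputs $\hat M$. A rate per unit-energy $\dot R$ (nats per unit energy) is achievable if for every $\epsilon>0$ there exist an encoder, a quantization region $\mathcal{D}$ and a decoder with $\log\mathsf{M}/\mathsf{E}>\dot R-\epsilon$ and $\Pr(\hat M\neq M)\to 0$ as $\mathsf{E}\to\infty$. The capacity per unit-energy $\dot C(0)$ is the supremum of achievable rates per unit-energy. *)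

theory Defs
  imports "HOL-Probability.Probability"
begin

definition Qfun :: "real \<Rightarrow> real" where
  "Qfun x = (1 / sqrt (2 * pi)) * (\<integral>t\<in>{x..}. exp (- t\<^sup>2 / 2) \<partial>lborel)"

text \<open>Relative entropy between two distributions on {-1,1} given by the
  probabilities a = P(Y=1) and b = Q(Y=1) (natural logarithm).\<close>
definition binary_rel_entropy :: "real \<Rightarrow> real \<Rightarrow> real" where
  "binary_rel_entropy a b = a * ln (a / b) + (1 - a) * ln ((1 - a) / (1 - b))"

definition p_one :: "real \<Rightarrow> real set \<Rightarrow> real \<Rightarrow> real" where
  "p_one sigma2 D x = measure (density lborel (normal_density 0 (sqrt sigma2))) {z. x + z \<in> D}"

text \<open>Channel law of an output word (True = output 1, False = output -1)
  given an input word of length n (memoryless channel).\<close>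
definition out_prob :: "real \<Rightarrow> real set \<Rightarrow> nat \<Rightarrow> (nat \<Rightarrow> real) \<Rightarrow> bool list \<Rightarrow> real" where
  "out_prob sigma2 D n x ys =
     (\<Prod>k<n. if ys ! k then p_one sigma2 D (x k) else 1 - p_one sigma2 D (x k))"

text \<open>Average error probability (uniform message on {1..M}) of the code with
  block length n, encoder f (message, time), region D and decoder g.\<close>
definition err_prob :: "real \<Rightarrow> nat \<Rightarrow> nat \<Rightarrow> (nat \<Rightarrow> nat \<Rightarrow> real) \<Rightarrow> real set \<Rightarrow> (bool list \<Rightarrow> nat) \<Rightarrow> real" where
  "err_prob sigma2 n M f D g =
     (1 / real M) * (\<Sum>m\<in>{1..M}. \<Sum>ys\<in>{ys. length ys = n}.
        (if g ys \<noteq> m then out_prob sigma2 D n (f m) ys else 0))"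

definition energy_ok :: "nat \<Rightarrow> nat \<Rightarrow> (nat \<Rightarrow> nat \<Rightarrow> real) \<Rightarrow> real \<Rightarrow> bool" where
  "energy_ok n M f E = (\<forall>m\<in>{1..M}. (\<Sum>k<n. (f m k)\<^sup>2) \<le> E)"

definition achievable_rpue :: "real \<Rightarrow> real \<Rightarrow> bool" where
  "achievable_rpue sigma2 R =
    (\<forall>eps>0. \<exists>(n :: real \<Rightarrow> nat) (M :: real \<Rightarrow> nat) (f :: real \<Rightarrow> nat \<Rightarrow> nat \<Rightarrow> real)
        (D :: real \<Rightarrow> real set) (g :: real \<Rightarrow> bool list \<Rightarrow> nat).
       (\<forall>\<^sub>F E in at_top. M E \<ge> 1 \<and> D E \<in> sets borel \<and> energy_ok (n E) (M E) (f E) E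
                          \<and> ln (real (M E)) / E > R - eps)
       \<and> ((\<lambda>E. err_prob sigma2 (n E) (M E) (f E) (D E) (g E)) \<longlongrightarrow> 0) at_top)"

definition capacity_per_unit_energy :: "real \<Rightarrow> real" where
  "capacity_per_unit_energy sigma2 = Sup {R. achievable_rpue sigma2 R}"

end

theory Submission
  imports Defs
begin

text \<open>
  The proof rests on one inequality: quantizing with any Borel region \<open>D\<close> cannot increase
  the divergence between the output laws of two inputs \<open>u, v\<close>, which for the unquantized
  Gaussian channel is \<open>(u - v)\<^sup>2/(2\<sigma>\<^sup>2)\<close> (lemma \<open>quantizer_data_processing\<close>, proved via
  the variational form \<open>a ln (a/b) = sup\<^sub>r (a ln r + a - r b)\<close> of a divergence term).
  \<^item> Converse: by the chain rule, a codeword of energy \<open>E\<close> yields an output law at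
    divergence at most \<open>E/(2\<sigma>\<^sup>2)\<close> from that of the zero input; a Fano-type averaging over the
    decoding events gives \<open>(1 - P\<^sub>e) ln M \<le> E/(2\<sigma>\<^sup>2) + 2\<close>, hence no rate above \<open>1/(2\<sigma>\<^sup>2)\<close>.
  \<^item> Achievability: pulse-position modulation with \<open>exp (\<alpha> E)\<close> messages and the threshold
    region \<open>{y. \<beta> \<surd>E \<le> y}\<close>, \<open>\<alpha> < \<beta>\<^sup>2/(2\<sigma>\<^sup>2)\<close>, has error probability bounded by Gaussian
    (Chernoff) tail bounds that vanish as \<open>E \<rightarrow> \<infinity>\<close>.
  \<^item> The same tail bounds show that threshold quantizers with input \<open>\<surd>E\<close> and threshold
    \<open>\<beta> \<surd>E\<close> reach divergence per unit energy arbitrarily close to \<open>1/(2\<sigma>\<^sup>2)\<close>, while data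
    processing bounds every threshold quantizer by \<open>1/(2\<sigma>\<^sup>2)\<close>.
\<close>

section \<open>The one-bit Gaussian channel law\<close>

lemma p_one_eq_integral:
  assumes "sigma2 > 0" and "D \<in> sets borel"
  shows "p_one sigma2 D x = (\<integral>y. normal_density x (sqrt sigma2) y * indicator D y \<partial>lborel)"
proof -
  let ?s = "sqrt sigma2"
  have shifted_D: "{z. x + z \<in> D} \<in> sets borel" using assms(2) by measurable
  have "p_one sigma2 D x = integral\<^sup>L (density lborel (normal_density 0 ?s)) (indicator {z. x + z \<in> D})"
    by (simp add: p_one_def)
  also have "\<dots> = (\<integral>z. normal_density 0 ?s z * indicator {z. x + z \<in> D} z \<partial>lborel)"
    using shifted_D by (subst integral_density) auto
  also have "\<dots> = (\<integral>z. normal_density x ?s (x + 1 * z) * indicator D (x + 1 * z) \<partial>lborel)"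
    by (intro Bochner_Integration.integral_cong) (auto simp: normal_density_def indicator_def)
  also have "\<dots> = (\<integral>y. normal_density x ?s y * indicator D y \<partial>lborel)"
    using lborel_integral_real_affine[of 1 "\<lambda>y. normal_density x ?s y * indicator D y" x] by simp
  finally show ?thesis .
qed

lemma p_one_bounds:
  assumes "sigma2 > 0"
  shows "0 \<le> p_one sigma2 D x" "p_one sigma2 D x \<le> 1"
proof -
  interpret prob_space "density lborel (normal_density 0 (sqrt sigma2))"
    by (rule prob_space_normal_density) (use assms in simp)
  show "0 \<le> p_one sigma2 D x" "p_one sigma2 D x \<le> 1" unfolding p_one_def by auto
qed

lemma Qfun_eq_p_one_threshold:
  assumes "sigma2 > 0"
  shows "Qfun ((T - x) / sqrt sigma2) = p_one sigma2 {y. T \<le> y} x"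
proof -
  define s where "s = sqrt sigma2"
  have s: "s > 0" using assms by (simp add: s_def)
  let ?g = "\<lambda>y. normal_density x s y * indicator {y. T \<le> y} y"
  have "p_one sigma2 {y. T \<le> y} x = (\<integral>y. ?g y \<partial>lborel)"
    unfolding s_def by (rule p_one_eq_integral[OF assms]) measurable
  also have "\<dots> = \<bar>s\<bar> *\<^sub>R (\<integral>t. ?g (x + s * t) \<partial>lborel)"
    by (rule lborel_integral_real_affine) (use s in simp)
  also have "\<dots> = (\<integral>t. s * ?g (x + s * t) \<partial>lborel)" using s by simp
  also have "\<dots> = (\<integral>t. indicator {(T - x) / s..} t *\<^sub>R ((1 / sqrt (2 * pi)) * exp (- t\<^sup>2 / 2)) \<partial>lborel)"
  proof (intro Bochner_Integration.integral_cong refl)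
    fix t
    have ind: "indicator {y. T \<le> y} (x + s * t) = (indicator {(T - x) / s..} t :: real)"
      using s by (auto simp: indicator_def field_simps)
    have "s * normal_density x s (x + s * t) = (1 / sqrt (2 * pi)) * exp (- t\<^sup>2 / 2)"
      using s by (simp add: normal_density_def real_sqrt_mult power2_eq_square field_simps)
    thus "s * ?g (x + s * t) = indicator {(T - x) / s..} t *\<^sub>R ((1 / sqrt (2 * pi)) * exp (- t\<^sup>2 / 2))"
      unfolding ind by (metis (no_types, lifting) mult.assoc mult.commute real_scaleR_def)
  qed
  also have "\<dots> = Qfun ((T - x) / s)"
    unfolding Qfun_def set_lebesgue_integral_def by (simp add: algebra_simps)
  finally show ?thesis by (simp add: s_def)
qed

lemma normal_density_likelihood_ratio:
  assumes "s > 0"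
  shows "normal_density u s y = normal_density v s y * exp ((2 * y * (u - v) + v\<^sup>2 - u\<^sup>2) / (2 * s\<^sup>2))"
proof -
  have "- (y - u)\<^sup>2 / (2 * s\<^sup>2) = - (y - v)\<^sup>2 / (2 * s\<^sup>2) + (2 * y * (u - v) + v\<^sup>2 - u\<^sup>2) / (2 * s\<^sup>2)"
    using assms by (simp add: field_simps power2_eq_square)
  thus ?thesis by (simp add: normal_density_def exp_add[symmetric])
qed

lemma normal_density_tilt:
  assumes "s > 0"
  shows "exp (m * y) * normal_density u s y = exp (m * u + m\<^sup>2 * s\<^sup>2 / 2) * normal_density (u + m * s\<^sup>2) s y"
proof -
  have "m * y + (- (y - u)\<^sup>2 / (2 * s\<^sup>2)) = (m * u + m\<^sup>2 * s\<^sup>2 / 2) + (- (y - (u + m * s\<^sup>2))\<^sup>2 / (2 * s\<^sup>2))"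
    using assms by (simp add: field_simps power2_eq_square)
  hence "exp (m * y) * exp (- (y - u)\<^sup>2 / (2 * s\<^sup>2))
       = exp (m * u + m\<^sup>2 * s\<^sup>2 / 2) * exp (- (y - (u + m * s\<^sup>2))\<^sup>2 / (2 * s\<^sup>2))"
    by (simp add: exp_add[symmetric])
  thus ?thesis unfolding normal_density_def by (simp add: algebra_simps)
qed

lemma normal_chernoff_bound:
  assumes s: "s > 0" and B[measurable]: "B \<in> sets borel"
    and on_B: "\<And>y. y \<in> B \<Longrightarrow> m * (y - w) \<ge> 0"
  shows "(\<integral>y. normal_density u s y * indicator B y \<partial>lborel) \<le> exp (m * (u - w) + m\<^sup>2 * s\<^sup>2 / 2)"
proof -
  let ?c = "exp (m * u + m\<^sup>2 * s\<^sup>2 / 2)"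
  have tilt: "exp (m * (y - w)) * normal_density u s y
      = exp (- m * w) * (?c * normal_density (u + m * s\<^sup>2) s y)" for y
    using normal_density_tilt[OF s, of m y u] by (simp add: algebra_simps exp_diff exp_minus field_simps)
  have "(\<integral>y. normal_density u s y * indicator B y \<partial>lborel)
      \<le> (\<integral>y. exp (m * (y - w)) * normal_density u s y \<partial>lborel)"
  proof (rule integral_mono)
    show "integrable lborel (\<lambda>y. normal_density u s y * indicator B y)"
      by (rule integrable_real_mult_indicator) (auto simp: integrable_normal_density[OF s])
    show "integrable lborel (\<lambda>y. exp (m * (y - w)) * normal_density u s y)"
      unfolding tilt using integrable_normal_density[OF s] by auto
    fix y
    have "indicator B y \<le> exp (m * (y - w))" using on_B[of y] by (auto simp: indicator_def)
    thus "normal_density u s y * indicator B y \<le> exp (m * (y - w)) * normal_density u s y"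
      using normal_density_nonneg[of u s y] by (metis mult.commute mult_left_mono)
  qed
  also have "\<dots> = exp (- m * w) * ?c"
    unfolding tilt using integral_normal_density[OF s] by simp
  also have "\<dots> = exp (m * (u - w) + m\<^sup>2 * s\<^sup>2 / 2)" by (simp add: exp_add[symmetric] algebra_simps)
  finally show ?thesis .
qed

lemma p_one_threshold_upper_tail:
  assumes "sigma2 > 0" and "u \<le> T"
  shows "p_one sigma2 {y. T \<le> y} u \<le> exp (- (T - u)\<^sup>2 / (2 * sigma2))"
proof -
  have s: "sqrt sigma2 > 0" "(sqrt sigma2)\<^sup>2 = sigma2" using assms by auto
  have "p_one sigma2 {y. T \<le> y} u
      = (\<integral>y. normal_density u (sqrt sigma2) y * indicator {y. T \<le> y} y \<partial>lborel)"
    by (rule p_one_eq_integral[OF assms(1)]) measurable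
  also have "\<dots> \<le> exp (((T - u) / sigma2) * (u - T) + ((T - u) / sigma2)\<^sup>2 * (sqrt sigma2)\<^sup>2 / 2)"
    by (rule normal_chernoff_bound[OF s(1)]) (use assms in auto)
  also have "\<dots> = exp (- (T - u)\<^sup>2 / (2 * sigma2))" using assms by (simp add: field_simps power2_eq_square)
  finally show ?thesis .
qed

lemma p_one_threshold_lower_tail:
  assumes "sigma2 > 0" and "T \<le> u"
  shows "1 - p_one sigma2 {y. T \<le> y} u \<le> exp (- (u - T)\<^sup>2 / (2 * sigma2))"
proof -
  have s: "sqrt sigma2 > 0" "(sqrt sigma2)\<^sup>2 = sigma2" using assms by auto
  let ?f = "normal_density u (sqrt sigma2)"
  have int_f: "integrable lborel ?f" by (rule integrable_normal_density[OF s(1)])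
  have "1 - p_one sigma2 {y. T \<le> y} u
      = (\<integral>y. ?f y \<partial>lborel) - (\<integral>y. ?f y * indicator {y. T \<le> y} y \<partial>lborel)"
    using p_one_eq_integral[OF assms(1), of "{y. T \<le> y}" u] integral_normal_density[OF s(1)] by simp
  also have "\<dots> = (\<integral>y. ?f y - ?f y * indicator {y. T \<le> y} y \<partial>lborel)"
    using integrable_real_mult_indicator[OF _ int_f, of "{y. T \<le> y}"] int_f by simp
  also have "\<dots> = (\<integral>y. ?f y * indicator {y. y < T} y \<partial>lborel)"
    by (intro Bochner_Integration.integral_cong) (auto simp: indicator_def)
  also have "\<dots> \<le> exp ((- (u - T) / sigma2) * (u - T) + (- (u - T) / sigma2)\<^sup>2 * (sqrt sigma2)\<^sup>2 / 2)"
    by (rule normal_chernoff_bound[OF s(1)])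
       (use assms in \<open>auto simp: mult_nonpos_nonpos divide_nonpos_pos\<close>)
  also have "\<dots> = exp (- (u - T)\<^sup>2 / (2 * sigma2))" using assms by (simp add: field_simps power2_eq_square)
  finally show ?thesis .
qed

lemma threshold_miss_le:
  assumes "sigma2 > 0" "E \<ge> 0" "\<beta> \<le> 1"
  shows "1 - p_one sigma2 {y. \<beta> * sqrt E \<le> y} (sqrt E) \<le> exp (- (1 - \<beta>)\<^sup>2 * E / (2 * sigma2))"
proof -
  have "(sqrt E - \<beta> * sqrt E)\<^sup>2 = (1 - \<beta>)\<^sup>2 * (sqrt E)\<^sup>2"
    by (simp add: power_mult_distrib[symmetric] algebra_simps)
  hence gap: "(sqrt E - \<beta> * sqrt E)\<^sup>2 = (1 - \<beta>)\<^sup>2 * E" using assms(2) by simp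
  have "0 \<le> (1 - \<beta>) * sqrt E" using assms by simp
  hence "\<beta> * sqrt E \<le> sqrt E" by (simp add: algebra_simps)
  from p_one_threshold_lower_tail[OF assms(1) this] show ?thesis unfolding gap by simp
qed

lemma threshold_false_alarm_le:
  assumes "sigma2 > 0" "E \<ge> 0" "\<beta> \<ge> 0"
  shows "p_one sigma2 {y. \<beta> * sqrt E \<le> y} 0 \<le> exp (- \<beta>\<^sup>2 * E / (2 * sigma2))"
  using p_one_threshold_upper_tail[OF assms(1), of 0 "\<beta> * sqrt E"] assms
  by (simp add: power_mult_distrib)

section \<open>Elementary inequalities for divergence terms\<close>

text \<open>The basic inequality \<open>x - y \<le> x ln (x/y)\<close> (from \<open>ln t \<le> t - 1\<close>), with the conventions
  \<open>0 ln (0/y) = 0\<close> and absolute continuity \<open>x > 0 \<longrightarrow> y > 0\<close>.\<close>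

lemma divergence_term_ge:
  fixes x y :: real
  assumes "x \<ge> 0" "y \<ge> 0" "x > 0 \<longrightarrow> y > 0"
  shows "x - y \<le> x * ln (x / y)"
proof (cases "x = 0")
  case False
  hence xy: "x > 0" "y > 0" using assms by auto
  have "ln (y / x) \<le> y / x - 1" using xy by (intro ln_le_minus_one) auto
  hence "x * ln (y / x) \<le> x * (y / x - 1)" using xy by (intro mult_left_mono) auto
  moreover have "ln (x / y) = - ln (y / x)" using xy by (simp add: ln_div)
  moreover have "x * (y / x - 1) = y - x" using xy by (simp add: field_simps)
  ultimately show ?thesis by simp
qed (use assms in simp)

lemma x_ln_x_ge: "x \<ge> 0 \<Longrightarrow> x - 1 \<le> x * ln (x::real)"
  using divergence_term_ge[of x 1] by simp

lemma tangent_le_divergence_term: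
  fixes p q r :: real
  assumes "p \<ge> 0" "q \<ge> 0" "p > 0 \<longrightarrow> q > 0" "r > 0"
  shows "p * ln r + p - r * q \<le> p * ln (p / q)"
proof (cases "p = 0")
  case False
  hence pq: "p > 0" "q > 0" using assms by auto
  have "p - r * q \<le> p * ln (p / (r * q))" by (rule divergence_term_ge) (use pq assms in auto)
  also have "ln (p / (r * q)) = ln (p / q) - ln r" using pq assms by (simp add: ln_div ln_mult)
  finally show ?thesis by (simp add: algebra_simps)
qed (use assms in simp)

text \<open>This variational form lets us
  pass divergence bounds through sums and integrals.\<close>

lemma divergence_term_le_of_tangents:
  fixes a b I :: real
  assumes lines: "\<And>r. r > 0 \<Longrightarrow> a * ln r + a - r * b \<le> I" and "a \<ge> 0" "b \<ge> 0"
  shows "(a > 0 \<longrightarrow> b > 0) \<and> a * ln (a / b) \<le> I"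
proof (cases "a = 0")
  case True
  have "0 \<le> I"
  proof (cases "b = 0")
    case True then show ?thesis using lines[of 1] \<open>a = 0\<close> by simp
  next
    case False
    hence "b > 0" using assms by simp
    show ?thesis
    proof (rule ccontr)
      assume "\<not> 0 \<le> I"
      hence "0 < - I / (2 * b)" using \<open>b > 0\<close> by (simp add: field_simps)
      from lines[OF this] have "- (- I / (2 * b)) * b \<le> I" using True by simp
      thus False using \<open>\<not> 0 \<le> I\<close> \<open>b > 0\<close> by (simp add: field_simps)
    qed
  qed
  thus ?thesis using True by simp
next
  case False
  hence a: "a > 0" using assms by simp
  have b: "b > 0"
  proof (rule ccontr)
    assume "\<not> b > 0" hence "b = 0" using assms by simp
    have "a * ln (exp ((I - a) / a + 1)) + a - exp ((I - a) / a + 1) * b \<le> I" by (rule lines) simp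
    hence "a * ((I - a) / a + 1) + a \<le> I" using \<open>b = 0\<close> by simp
    thus False using a by (simp add: field_simps)
  qed
  have "a * ln (a / b) + a - (a / b) * b \<le> I" by (rule lines) (use a b in simp)
  thus ?thesis using a b by simp
qed

lemma log_sum_inequality:
  fixes P Q :: "'a \<Rightarrow> real"
  assumes "\<And>y. y \<in> S \<Longrightarrow> P y \<ge> 0" "\<And>y. y \<in> S \<Longrightarrow> Q y \<ge> 0"
    "\<And>y. y \<in> S \<Longrightarrow> P y > 0 \<Longrightarrow> Q y > 0"
  shows "(sum P S > 0 \<longrightarrow> sum Q S > 0)
    \<and> sum P S * ln (sum P S / sum Q S) \<le> (\<Sum>y\<in>S. P y * ln (P y / Q y))"
proof (rule divergence_term_le_of_tangents)
  fix r :: real assume r: "r > 0"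
  have "sum P S * ln r + sum P S - r * sum Q S = (\<Sum>y\<in>S. P y * ln r + P y - r * Q y)"
    by (simp add: sum.distrib sum_subtractf sum_distrib_left sum_distrib_right)
  also have "\<dots> \<le> (\<Sum>y\<in>S. P y * ln (P y / Q y))"
    by (intro sum_mono tangent_le_divergence_term) (use assms r in auto)
  finally show "sum P S * ln r + sum P S - r * sum Q S \<le> (\<Sum>y\<in>S. P y * ln (P y / Q y))" .
qed (use assms in \<open>auto intro: sum_nonneg\<close>)

text \<open>A crude lower bound for the binary divergence, used when \<open>b\<close> is tiny.\<close>

lemma binary_rel_entropy_ge:
  assumes "0 < a" "a \<le> 1" "0 < b" "b \<le> 1" "a < 1 \<longrightarrow> b < 1"
  shows "- a * ln b - 1 \<le> binary_rel_entropy a b"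
proof -
  have "a - 1 - a * ln b \<le> a * ln (a / b)"
    using x_ln_x_ge[of a] assms by (simp add: ln_div algebra_simps)
  moreover have "(1 - a) - (1 - b) \<le> (1 - a) * ln ((1 - a) / (1 - b))"
    by (rule divergence_term_ge) (use assms in auto)
  ultimately show ?thesis unfolding binary_rel_entropy_def using assms by linarith
qed

section \<open>Data processing for the one-bit quantizer\<close>

lemma cell_divergence_le:
  fixes f g h :: "real \<Rightarrow> real"
  assumes [measurable]: "B \<in> sets borel"
    and int_f: "integrable lborel f" and int_g: "integrable lborel g"
    and int_fh: "integrable lborel (\<lambda>y. f y * h y)"
    and g_pos: "\<And>y. g y > 0" and ratio: "\<And>y. f y = g y * exp (h y)"
  defines "a \<equiv> \<integral>y. f y * indicator B y \<partial>lborel" and "b \<equiv> \<integral>y. g y * indicator B y \<partial>lborel"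
  shows "(a > 0 \<longrightarrow> b > 0) \<and> a * ln (a / b) \<le> (\<integral>y. f y * h y * indicator B y \<partial>lborel)"
proof (rule divergence_term_le_of_tangents)
  have f_pos: "f y > 0" for y using g_pos[of y] by (simp add: ratio)
  have i1: "integrable lborel (\<lambda>y. f y * indicator B y)" by (rule integrable_real_mult_indicator) (auto simp: int_f)
  have i2: "integrable lborel (\<lambda>y. g y * indicator B y)" by (rule integrable_real_mult_indicator) (auto simp: int_g)
  show "a \<ge> 0" "b \<ge> 0" unfolding a_def b_def
    using f_pos g_pos by (auto intro!: integral_nonneg simp: less_le_not_le)
  fix r :: real assume r: "r > 0"
  have "a * ln r + a - r * b = (\<integral>y. (f y * ln r + f y - r * g y) * indicator B y \<partial>lborel)"
    unfolding a_def b_def using i1 i2 by (simp add: algebra_simps)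
  also have "\<dots> \<le> (\<integral>y. f y * h y * indicator B y \<partial>lborel)"
  proof (rule integral_mono)
    show "integrable lborel (\<lambda>y. (f y * ln r + f y - r * g y) * indicator B y)"
      using i1 i2 by (simp add: algebra_simps)
    show "integrable lborel (\<lambda>y. f y * h y * indicator B y)"
      by (rule integrable_real_mult_indicator) (auto simp: int_fh)
    fix y
    have "f y * ln r + f y - r * g y \<le> f y * ln (f y / g y)"
      using f_pos[of y] g_pos[of y] r by (intro tangent_le_divergence_term) auto
    also have "f y * ln (f y / g y) = f y * h y" using g_pos[of y] by (simp add: ratio)
    finally show "(f y * ln r + f y - r * g y) * indicator B y \<le> f y * h y * indicator B y"
      by (simp add: indicator_def)
  qed
  finally show "a * ln r + a - r * b \<le> (\<integral>y. f y * h y * indicator B y \<partial>lborel)" .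
qed

lemma integral_indicator_Compl:
  fixes F :: "real \<Rightarrow> real"
  assumes "integrable lborel F" "D \<in> sets borel"
  shows "(\<integral>y. F y * indicator (- D) y \<partial>lborel) = (\<integral>y. F y \<partial>lborel) - (\<integral>y. F y * indicator D y \<partial>lborel)"
proof -
  have "(\<integral>y. F y * indicator (- D) y \<partial>lborel) = (\<integral>y. F y - F y * indicator D y \<partial>lborel)"
    by (intro Bochner_Integration.integral_cong) (auto simp: indicator_def)
  also have "\<dots> = (\<integral>y. F y \<partial>lborel) - (\<integral>y. F y * indicator D y \<partial>lborel)"
    using assms integrable_real_mult_indicator[OF _ assms(1), of D] by simp
  finally show ?thesis .
qed

lemma normal_log_likelihood_ratio_integral:
  fixes s u v :: real
  assumes s: "s > 0"
  defines "h y \<equiv> (2 * y * (u - v) + v\<^sup>2 - u\<^sup>2) / (2 * s\<^sup>2)"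
  shows "integrable lborel (\<lambda>y. normal_density u s y * h y)"
    and "(\<integral>y. normal_density u s y * h y \<partial>lborel) = (u - v)\<^sup>2 / (2 * s\<^sup>2)"
proof -
  let ?f = "normal_density u s"
  have fh: "(\<lambda>y. ?f y * h y) = (\<lambda>y. (u - v) / s\<^sup>2 * (?f y * y) + (v\<^sup>2 - u\<^sup>2) / (2 * s\<^sup>2) * ?f y)"
    using s by (auto simp: h_def fun_eq_iff field_simps)
  have int_f: "integrable lborel ?f" by (rule integrable_normal_density[OF s])
  have int_fy: "integrable lborel (\<lambda>y. ?f y * y)" by (rule integrable_normal_moment_nz_1[OF s])
  show "integrable lborel (\<lambda>y. ?f y * h y)" unfolding fh using int_fy int_f by auto
  have "(\<integral>y. ?f y * h y \<partial>lborel) = (u - v) / s\<^sup>2 * u + (v\<^sup>2 - u\<^sup>2) / (2 * s\<^sup>2)"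
    unfolding fh using int_fy int_f integral_normal_moment_nz_1[OF s, of u]
      integral_normal_density[OF s, of u]
    by simp
  also have "\<dots> = (u - v)\<^sup>2 / (2 * s\<^sup>2)" using s by (simp add: field_simps power2_eq_square)
  finally show "(\<integral>y. ?f y * h y \<partial>lborel) = (u - v)\<^sup>2 / (2 * s\<^sup>2)" .
qed

text \<open>The proof
  applies \<open>cell_divergence_le\<close> to the two cells \<open>D\<close> and \<open>- D\<close> of the quantizer.\<close>

lemma quantizer_data_processing:
  assumes s2: "sigma2 > 0" and D[measurable]: "D \<in> sets borel"
  shows "binary_rel_entropy (p_one sigma2 D u) (p_one sigma2 D v) \<le> (u - v)\<^sup>2 / (2 * sigma2)"
    and "p_one sigma2 D u > 0 \<longrightarrow> p_one sigma2 D v > 0"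
    and "p_one sigma2 D u < 1 \<longrightarrow> p_one sigma2 D v < 1"
proof -
  define s where "s = sqrt sigma2"
  have s: "s > 0" "s\<^sup>2 = sigma2" using s2 by (auto simp: s_def)
  define f where "f = normal_density u s"
  define g where "g = normal_density v s"
  define h where "h y = (2 * y * (u - v) + v\<^sup>2 - u\<^sup>2) / (2 * s\<^sup>2)" for y
  have ratio: "f y = g y * exp (h y)" for y
    using normal_density_likelihood_ratio[OF s(1)] by (simp add: f_def g_def h_def)
  have g_pos: "g y > 0" for y using normal_density_pos[OF s(1)] by (simp add: g_def)
  have int_f: "integrable lborel f" and int_g: "integrable lborel g"
    and mass_f: "(\<integral>y. f y \<partial>lborel) = 1" and mass_g: "(\<integral>y. g y \<partial>lborel) = 1"
    using integrable_normal_density[OF s(1)] integral_normal_density[OF s(1)]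
    by (simp_all add: f_def g_def)
  note llr = normal_log_likelihood_ratio_integral[OF s(1), of u v, folded f_def h_def, unfolded s(2)]
  have pu: "p_one sigma2 D u = (\<integral>y. f y * indicator D y \<partial>lborel)"
    using p_one_eq_integral[OF s2 D] by (simp add: f_def s_def)
  have pv: "p_one sigma2 D v = (\<integral>y. g y * indicator D y \<partial>lborel)"
    using p_one_eq_integral[OF s2 D] by (simp add: g_def s_def)
  note in_D = cell_divergence_le[OF D int_f int_g llr(1) g_pos ratio]
  note off_D = cell_divergence_le[of "- D", OF _ int_f int_g llr(1) g_pos ratio]
  note facts = in_D off_D llr(2) mass_f mass_g
    integral_indicator_Compl[OF int_f D] integral_indicator_Compl[OF int_g D]
    integral_indicator_Compl[OF llr(1) D]
  show "binary_rel_entropy (p_one sigma2 D u) (p_one sigma2 D v) \<le> (u - v)\<^sup>2 / (2 * sigma2)"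
    using facts unfolding binary_rel_entropy_def pu pv by auto
  show "p_one sigma2 D u > 0 \<longrightarrow> p_one sigma2 D v > 0"
    using facts unfolding pu pv by auto
  show "p_one sigma2 D u < 1 \<longrightarrow> p_one sigma2 D v < 1"
    using facts unfolding pu pv by auto
qed

section \<open>Memoryless laws on output words\<close>

definition words :: "nat \<Rightarrow> bool list set" where
  "words n = {ys. length ys = n}"

definition word_prob :: "(nat \<Rightarrow> bool \<Rightarrow> real) \<Rightarrow> nat \<Rightarrow> bool list \<Rightarrow> real" where
  "word_prob a n ys = (\<Prod>k<n. a k (ys ! k))"

definition bit_law :: "real \<Rightarrow> bool \<Rightarrow> real" where
  "bit_law p t = (if t then p else 1 - p)"

lemma out_prob_eq_word_prob:
  "out_prob sigma2 D n x = word_prob (\<lambda>k. bit_law (p_one sigma2 D (x k))) n"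
  by (simp add: fun_eq_iff out_prob_def word_prob_def bit_law_def)

lemma sum_bool: "(\<Sum>t\<in>(UNIV :: bool set). f t) = f True + f False"
  by (simp add: UNIV_bool add.commute)

lemma binary_rel_entropy_eq_sum:
  "binary_rel_entropy a b = (\<Sum>t\<in>UNIV. bit_law a t * ln (bit_law a t / bit_law b t))"
  by (simp add: sum_bool bit_law_def binary_rel_entropy_def)

lemma finite_words [simp]: "finite (words n)"
proof -
  have "words n = {xs. set xs \<subseteq> (UNIV :: bool set) \<and> length xs = n}" by (auto simp: words_def)
  thus ?thesis using finite_lists_length_eq[of "UNIV :: bool set" n] by simp
qed

text \<open>Words of length \<open>n + 1\<close> are a first letter followed by a word of length \<open>n\<close>; this
  is the induction step for all facts about product laws.\<close>

lemma sum_words_Suc: "sum f (words (Suc n)) = (\<Sum>t\<in>UNIV. \<Sum>ys\<in>words n. f (t # ys))"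
proof -
  have eq: "words (Suc n) = (\<lambda>(t, ys). t # ys) ` (UNIV \<times> words n)"
    by (auto simp: words_def length_Suc_conv image_iff)
  have inj: "inj_on (\<lambda>(t, ys). t # ys) (UNIV \<times> words n)" by (auto simp: inj_on_def)
  have "sum f (words (Suc n)) = (\<Sum>(t, ys)\<in>UNIV \<times> words n. f (t # ys))"
    unfolding eq by (subst sum.reindex[OF inj]) (auto intro: sum.cong)
  also have "\<dots> = (\<Sum>t\<in>UNIV. \<Sum>ys\<in>words n. f (t # ys))" by (rule sum.cartesian_product[symmetric])
  finally show ?thesis .
qed

lemma word_prob_Cons: "word_prob a (Suc n) (t # ys) = a 0 t * word_prob (\<lambda>k. a (Suc k)) n ys"
  unfolding word_prob_def by (subst prod.lessThan_Suc_shift) simp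

lemma word_prob_nonneg: "(\<And>k t. a k t \<ge> 0) \<Longrightarrow> word_prob a n ys \<ge> 0"
  unfolding word_prob_def by (intro prod_nonneg) auto

lemma word_prob_sum:
  assumes "\<And>k. a k True + a k False = 1"
  shows "(\<Sum>ys\<in>words n. word_prob a n ys) = 1"
  using assms
proof (induction n arbitrary: a)
  case 0 thus ?case by (simp add: words_def word_prob_def)
next
  case (Suc n)
  have "(\<Sum>ys\<in>words (Suc n). word_prob a (Suc n) ys)
      = (\<Sum>t\<in>UNIV. a 0 t * (\<Sum>ys\<in>words n. word_prob (\<lambda>k. a (Suc k)) n ys))"
    by (simp add: sum_words_Suc word_prob_Cons sum_distrib_left)
  also have "\<dots> = 1" using Suc.IH[of "\<lambda>k. a (Suc k)"] Suc.prems by (simp add: sum_bool)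
  finally show ?case .
qed

lemma word_prob_marginal:
  assumes "\<And>k. a k True + a k False = 1" and "j < n"
  shows "(\<Sum>ys\<in>words n. if ys ! j then word_prob a n ys else 0) = a j True"
  using assms
proof (induction n arbitrary: a j)
  case (Suc n)
  let ?a' = "\<lambda>k. a (Suc k)"
  show ?case
  proof (cases j)
    case 0
    have "(\<Sum>ys\<in>words (Suc n). if ys ! j then word_prob a (Suc n) ys else 0)
        = (\<Sum>t\<in>UNIV. \<Sum>ys\<in>words n. (if t then a 0 t else 0) * word_prob ?a' n ys)"
      unfolding sum_words_Suc by (intro sum.cong refl) (simp add: word_prob_Cons 0)
    also have "\<dots> = (\<Sum>t\<in>UNIV. (if t then a 0 t else 0) * (\<Sum>ys\<in>words n. word_prob ?a' n ys))"
      by (simp add: sum_distrib_left)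
    also have "\<dots> = a j True" using word_prob_sum[of ?a' n] Suc.prems 0 by (simp add: sum_bool)
    finally show ?thesis .
  next
    case (Suc j')
    have "(\<Sum>ys\<in>words (Suc n). if ys ! j then word_prob a (Suc n) ys else 0)
        = (\<Sum>t\<in>UNIV. \<Sum>ys\<in>words n. a 0 t * (if ys ! j' then word_prob ?a' n ys else 0))"
      unfolding sum_words_Suc by (intro sum.cong refl) (simp add: word_prob_Cons Suc)
    also have "\<dots> = (\<Sum>t\<in>UNIV. a 0 t * (\<Sum>ys\<in>words n. if ys ! j' then word_prob ?a' n ys else 0))"
      by (simp add: sum_distrib_left)
    also have "\<dots> = (\<Sum>t\<in>UNIV. a 0 t) * a j True"
      using Suc.IH[of ?a' j'] Suc.prems \<open>j = Suc j'\<close> by (simp add: sum_distrib_right)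
    also have "\<dots> = a j True" using Suc.prems(1)[of 0] by (simp add: sum_bool)
    finally show ?thesis .
  qed
qed simp

lemma word_prob_marginal_False:
  assumes "\<And>k. a k True + a k False = 1" and "j < n"
  shows "(\<Sum>ys\<in>words n. if \<not> ys ! j then word_prob a n ys else 0) = 1 - a j True"
proof -
  have "(\<Sum>ys\<in>words n. if \<not> ys ! j then word_prob a n ys else 0)
      = (\<Sum>ys\<in>words n. word_prob a n ys) - (\<Sum>ys\<in>words n. if ys ! j then word_prob a n ys else 0)"
    by (auto simp: sum_subtractf[symmetric] intro!: sum.cong)
  thus ?thesis using word_prob_sum[of a n, OF assms(1)] word_prob_marginal[of a j n, OF assms] by simp
qed

lemma word_prob_pos_imp:
  assumes "\<And>k t. a k t \<ge> 0" "\<And>k t. a k t > 0 \<Longrightarrow> b k t > 0"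
    and "word_prob a n ys > 0"
  shows "word_prob b n ys > 0"
proof -
  have "a k (ys ! k) \<noteq> 0" if "k < n" for k
    using assms(3) that unfolding word_prob_def by (metis finite_lessThan lessThan_iff less_irrefl prod_zero_iff)
  hence "b k (ys ! k) > 0" if "k < n" for k using assms(1,2) that by (simp add: less_le)
  thus ?thesis unfolding word_prob_def by (intro prod_pos) auto
qed

text \<open>The logarithm of a product ratio splits, respecting the convention \<open>0 ln 0 = 0\<close>;
  this is the step of the chain rule.\<close>

lemma mult_ln_split:
  fixes x y x' y' :: real
  assumes "x \<ge> 0" "y \<ge> 0" "x > 0 \<longrightarrow> x' > 0" "y > 0 \<longrightarrow> y' > 0"
  shows "x * y * ln (x * y / (x' * y')) = x * y * ln (x / x') + x * (y * ln (y / y'))"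
proof (cases "x = 0 \<or> y = 0")
  case False
  hence "x > 0" "y > 0" "x' > 0" "y' > 0" using assms by auto
  hence "ln (x * y / (x' * y')) = ln (x / x') + ln (y / y')"
    by (simp add: ln_div ln_mult)
  thus ?thesis by (simp add: algebra_simps)
qed auto

lemma word_prob_divergence:
  assumes "\<And>k t. a k t \<ge> 0" "\<And>k t. b k t \<ge> 0" "\<And>k t. a k t > 0 \<Longrightarrow> b k t > 0"
    and "\<And>k. a k True + a k False = 1"
  shows "(\<Sum>ys\<in>words n. word_prob a n ys * ln (word_prob a n ys / word_prob b n ys))
       = (\<Sum>k<n. \<Sum>t\<in>UNIV. a k t * ln (a k t / b k t))"
  using assms
proof (induction n arbitrary: a b)
  case 0 thus ?case by (simp add: words_def word_prob_def)
next
  case (Suc n)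
  let ?a = "\<lambda>k. a (Suc k)" and ?b = "\<lambda>k. b (Suc k)"
  let ?div = "\<lambda>ys. word_prob ?a n ys * ln (word_prob ?a n ys / word_prob ?b n ys)"
  have IH: "(\<Sum>ys\<in>words n. ?div ys) = (\<Sum>k<n. \<Sum>t\<in>UNIV. ?a k t * ln (?a k t / ?b k t))"
    by (rule Suc.IH) (use Suc.prems in auto)
  have total: "(\<Sum>ys\<in>words n. word_prob ?a n ys) = 1" by (rule word_prob_sum) (use Suc.prems in auto)
  have "(\<Sum>ys\<in>words (Suc n). word_prob a (Suc n) ys * ln (word_prob a (Suc n) ys / word_prob b (Suc n) ys))
      = (\<Sum>t\<in>UNIV. \<Sum>ys\<in>words n. a 0 t * word_prob ?a n ys * ln (a 0 t / b 0 t) + a 0 t * ?div ys)"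
    unfolding sum_words_Suc word_prob_Cons
    by (intro sum.cong refl mult_ln_split)
       (use Suc.prems word_prob_nonneg[of ?a] word_prob_pos_imp[of ?a ?b] in auto)
  also have "\<dots> = (\<Sum>t\<in>UNIV. a 0 t * ln (a 0 t / b 0 t) * (\<Sum>ys\<in>words n. word_prob ?a n ys)
                    + a 0 t * (\<Sum>ys\<in>words n. ?div ys))"
    by (simp add: sum.distrib sum_distrib_left sum_distrib_right algebra_simps)
  also have "\<dots> = (\<Sum>t\<in>UNIV. a 0 t * ln (a 0 t / b 0 t)) + (\<Sum>t\<in>UNIV. a 0 t) * (\<Sum>ys\<in>words n. ?div ys)"
    unfolding total by (simp add: sum.distrib sum_distrib_right)
  also have "\<dots> = (\<Sum>k<Suc n. \<Sum>t\<in>UNIV. a k t * ln (a k t / b k t))"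
    unfolding IH sum.lessThan_Suc_shift using Suc.prems(4)[of 0] by (simp add: sum_bool)
  finally show ?case .
qed

section \<open>The converse: no rate above \<open>1/(2\<sigma>\<^sup>2)\<close>\<close>

lemma out_prob_nonneg: "sigma2 > 0 \<Longrightarrow> out_prob sigma2 D n x ys \<ge> 0"
  unfolding out_prob_eq_word_prob
  by (rule word_prob_nonneg) (use p_one_bounds in \<open>auto simp: bit_law_def\<close>)

lemma out_prob_sum: "(\<Sum>ys\<in>words n. out_prob sigma2 D n x ys) = 1"
  unfolding out_prob_eq_word_prob by (rule word_prob_sum) (simp add: bit_law_def)

lemma out_prob_pos_zero_input:
  assumes "sigma2 > 0" "D \<in> sets borel" "out_prob sigma2 D n x ys > 0"
  shows "out_prob sigma2 D n (\<lambda>_. 0) ys > 0"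
  using assms(3) unfolding out_prob_eq_word_prob
  by (rule word_prob_pos_imp[rotated 2])
     (use p_one_bounds[OF assms(1)] quantizer_data_processing(2,3)[OF assms(1,2)]
       in \<open>auto simp: bit_law_def split: if_splits\<close>)

text \<open>The output laws of a codeword \<open>x\<close> and of the all-zero input differ in divergence by at
  most the energy of \<open>x\<close> over \<open>2\<sigma>\<^sup>2\<close> (chain rule plus letterwise data processing).\<close>

lemma output_divergence_le_energy:
  fixes n :: nat and x :: "nat \<Rightarrow> real"
  assumes s2: "sigma2 > 0" and D: "D \<in> sets borel"
  defines "P \<equiv> out_prob sigma2 D n x" and "Q \<equiv> out_prob sigma2 D n (\<lambda>_. 0)"
  shows "(\<Sum>ys\<in>words n. P ys * ln (P ys / Q ys)) \<le> (\<Sum>k<n. (x k)\<^sup>2) / (2 * sigma2)"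
proof -
  let ?p = "p_one sigma2 D"
  have "(\<Sum>ys\<in>words n. P ys * ln (P ys / Q ys))
      = (\<Sum>k<n. \<Sum>t\<in>UNIV. bit_law (?p (x k)) t * ln (bit_law (?p (x k)) t / bit_law (?p 0) t))"
    unfolding P_def Q_def out_prob_eq_word_prob
    by (rule word_prob_divergence)
       (use p_one_bounds[OF s2] quantizer_data_processing(2,3)[OF s2 D]
         in \<open>auto simp: bit_law_def split: if_splits\<close>)
  also have "\<dots> = (\<Sum>k<n. binary_rel_entropy (?p (x k)) (?p 0))"
    by (simp add: binary_rel_entropy_eq_sum)
  also have "\<dots> \<le> (\<Sum>k<n. (x k)\<^sup>2 / (2 * sigma2))"
    using quantizer_data_processing(1)[OF s2 D, of "x _" 0] by (intro sum_mono) simp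
  also have "\<dots> = (\<Sum>k<n. (x k)\<^sup>2) / (2 * sigma2)" by (simp add: sum_divide_distrib)
  finally show ?thesis .
qed

text \<open>Data processing for a decoding event \<open>A\<close>: the divergence term of the event masses is
  bounded by the full divergence plus 1 (the complementary event costs at most 1).\<close>

lemma event_divergence_le:
  fixes P Q :: "'a \<Rightarrow> real"
  assumes "finite Y" "A \<subseteq> Y" "sum Q Y \<le> 1"
    and P: "\<And>y. y \<in> Y \<Longrightarrow> P y \<ge> 0" and Q: "\<And>y. y \<in> Y \<Longrightarrow> Q y \<ge> 0"
    and ac: "\<And>y. y \<in> Y \<Longrightarrow> P y > 0 \<Longrightarrow> Q y > 0"
  shows "(sum P A > 0 \<longrightarrow> sum Q A > 0)
    \<and> sum P A * ln (sum P A / sum Q A) \<le> (\<Sum>y\<in>Y. P y * ln (P y / Q y)) + 1"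
proof -
  let ?d = "\<lambda>y. P y * ln (P y / Q y)"
  have on_A: "(sum P A > 0 \<longrightarrow> sum Q A > 0) \<and> sum P A * ln (sum P A / sum Q A) \<le> sum ?d A"
    by (rule log_sum_inequality) (use assms in auto)
  have "sum P (Y - A) - sum Q (Y - A) = (\<Sum>y\<in>Y - A. P y - Q y)" by (simp add: sum_subtractf)
  also have "\<dots> \<le> sum ?d (Y - A)" by (intro sum_mono divergence_term_ge) (use assms in auto)
  finally have "sum P (Y - A) - sum Q (Y - A) \<le> sum ?d (Y - A)" .
  moreover have "sum Q (Y - A) \<le> sum Q Y" using Q by (intro sum_mono2) (use assms in auto)
  moreover have "sum P (Y - A) \<ge> 0" using P by (intro sum_nonneg) auto
  ultimately have off_A: "- 1 \<le> sum ?d (Y - A)" using assms(3) by linarith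
  have "sum ?d Y = sum ?d A + sum ?d (Y - A)"
    using assms(1,2) by (subst sum.subset_diff[of A]) auto
  thus ?thesis using on_A off_A by linarith
qed

lemma fano_averaging:
  fixes c q :: "nat \<Rightarrow> real"
  assumes M: "M \<ge> 1"
    and c: "\<And>m. m \<in> {1..M} \<Longrightarrow> c m \<ge> 0" and q: "\<And>m. m \<in> {1..M} \<Longrightarrow> q m \<ge> 0"
    and ac: "\<And>m. m \<in> {1..M} \<Longrightarrow> c m > 0 \<Longrightarrow> q m > 0"
    and q_sum: "(\<Sum>m\<in>{1..M}. q m) \<le> 1"
    and div: "\<And>m. m \<in> {1..M} \<Longrightarrow> c m * ln (c m / q m) \<le> K"
  shows "(\<Sum>m\<in>{1..M}. c m) / real M * ln (real M) \<le> K + 1"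
proof -
  define C where "C = (\<Sum>m\<in>{1..M}. c m)"
  have M_pos: "real M > 0" using M by simp
  have C: "C \<ge> 0" unfolding C_def using c by (intro sum_nonneg) auto
  show ?thesis
  proof (cases "C = 0")
    case True
    hence "c 1 = 0" using c M unfolding C_def by (subst (asm) sum_nonneg_eq_0_iff) auto
    thus ?thesis using div[of 1] M True by (simp add: C_def)
  next
    case False
    hence C_pos: "C > 0" using C by simp
    text \<open>Summing the tangent lines at \<open>r = C\<close> gives \<open>C ln C \<le> M K\<close>.\<close>
    have "(\<Sum>m\<in>{1..M}. c m * ln C + c m - C * q m) \<le> (\<Sum>m\<in>{1..M}. c m * ln (c m / q m))"
      by (intro sum_mono tangent_le_divergence_term) (use c q ac C_pos in auto)
    also have "\<dots> \<le> (\<Sum>m\<in>{1..M}. K)" by (intro sum_mono div)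
    also have "\<dots> = real M * K" by simp
    finally have "C * ln C + C - C * (\<Sum>m\<in>{1..M}. q m) \<le> real M * K"
      by (simp add: sum.distrib sum_subtractf sum_distrib_left sum_distrib_right C_def)
    moreover have "C * (\<Sum>m\<in>{1..M}. q m) \<le> C" using q_sum C_pos by (simp add: mult_left_le)
    ultimately have CC: "C * ln C \<le> real M * K" by linarith
    text \<open>And \<open>x ln x \<ge> x - 1\<close> at \<open>x = C / M\<close> gives \<open>C ln M \<le> C ln C + M - C\<close>.\<close>
    have "C / real M - 1 \<le> C / real M * ln (C / real M)" by (rule x_ln_x_ge) (use C M_pos in simp)
    hence "real M * (C / real M - 1) \<le> real M * (C / real M * ln (C / real M))"
      using M_pos by (intro mult_left_mono) auto
    moreover have "real M * (C / real M - 1) = C - real M" using M_pos by (simp add: field_simps)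
    moreover have "real M * (C / real M * ln (C / real M)) = C * ln C - C * ln (real M)"
      using M_pos C_pos by (simp add: ln_div algebra_simps)
    ultimately have "C - real M \<le> C * ln C - C * ln (real M)" by simp
    hence "C * ln (real M) \<le> real M * (K + 1)" using CC C_pos by (simp add: algebra_simps)
    thus ?thesis using M_pos by (simp add: C_def field_simps)
  qed
qed

lemma sum_decoding_events_le:
  fixes Q :: "'a \<Rightarrow> real"
  assumes "finite Y" "\<And>y. y \<in> Y \<Longrightarrow> Q y \<ge> 0"
  shows "(\<Sum>m\<in>S. sum Q {y \<in> Y. g y = m}) \<le> sum Q Y"
proof -
  have "(\<Sum>m\<in>S. sum Q {y \<in> Y. g y = m}) = (\<Sum>m\<in>S. \<Sum>y\<in>Y. if g y = m then Q y else 0)"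
    using assms(1) by (simp add: sum.inter_filter)
  also have "\<dots> = (\<Sum>y\<in>Y. \<Sum>m\<in>S. if g y = m then Q y else 0)" by (rule sum.swap)
  also have "\<dots> \<le> sum Q Y"
  proof (rule sum_mono)
    fix y assume "y \<in> Y"
    show "(\<Sum>m\<in>S. if g y = m then Q y else 0) \<le> Q y"
    proof (cases "finite S")
      case True thus ?thesis using assms(2)[OF \<open>y \<in> Y\<close>] by (simp add: sum.delta')
    qed (use assms(2)[OF \<open>y \<in> Y\<close>] in simp)
  qed
  finally show ?thesis .
qed

lemma err_prob_eq_one_minus_success:
  assumes "M \<ge> 1"
  shows "err_prob sigma2 n M f D g
    = 1 - (\<Sum>m\<in>{1..M}. \<Sum>ys\<in>{ys \<in> words n. g ys = m}. out_prob sigma2 D n (f m) ys) / real M"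
proof -
  have miss: "(\<Sum>ys\<in>words n. if g ys \<noteq> m then out_prob sigma2 D n (f m) ys else 0)
      = 1 - (\<Sum>ys\<in>{ys \<in> words n. g ys = m}. out_prob sigma2 D n (f m) ys)" for m
  proof -
    have "(\<Sum>ys\<in>words n. if g ys \<noteq> m then out_prob sigma2 D n (f m) ys else 0)
        = (\<Sum>ys\<in>words n. out_prob sigma2 D n (f m) ys)
          - (\<Sum>ys\<in>words n. if g ys = m then out_prob sigma2 D n (f m) ys else 0)"
      by (auto simp: sum_subtractf[symmetric] intro!: sum.cong)
    thus ?thesis by (simp only: out_prob_sum sum.inter_filter[symmetric] finite_words)
  qed
  show ?thesis
    unfolding err_prob_def words_def[symmetric] miss using assms by (simp add: sum_subtractf field_simps)
qed

lemma converse_code_bound: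
  assumes s2: "sigma2 > 0" and D: "D \<in> sets borel" and M: "M \<ge> 1"
    and energy: "energy_ok n M f E"
  shows "(1 - err_prob sigma2 n M f D g) * ln (real M) \<le> E / (2 * sigma2) + 2"
proof -
  define P where "P m = out_prob sigma2 D n (f m)" for m
  define Q where "Q = out_prob sigma2 D n (\<lambda>_. 0)"
  define A where "A m = {ys \<in> words n. g ys = m}" for m
  define c where "c m = sum (P m) (A m)" for m
  define q where "q m = sum Q (A m)" for m
  have P: "P m ys \<ge> 0" and Q: "Q ys \<ge> 0" for m ys
    using out_prob_nonneg[OF s2] by (simp_all add: P_def Q_def)
  have Q_sum: "sum Q (words n) = 1" by (simp add: Q_def out_prob_sum)
  have per_message: "(c m > 0 \<longrightarrow> q m > 0) \<and> c m * ln (c m / q m) \<le> E / (2 * sigma2) + 1"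
    if m: "m \<in> {1..M}" for m
  proof -
    have "(c m > 0 \<longrightarrow> q m > 0)
        \<and> c m * ln (c m / q m) \<le> (\<Sum>ys\<in>words n. P m ys * ln (P m ys / Q ys)) + 1"
      unfolding c_def q_def
      by (rule event_divergence_le)
         (use P Q Q_sum out_prob_pos_zero_input[OF s2 D] in \<open>auto simp: A_def P_def Q_def\<close>)
    moreover have "(\<Sum>ys\<in>words n. P m ys * ln (P m ys / Q ys)) \<le> (\<Sum>k<n. (f m k)\<^sup>2) / (2 * sigma2)"
      unfolding P_def Q_def by (rule output_divergence_le_energy[OF s2 D])
    moreover have "(\<Sum>k<n. (f m k)\<^sup>2) / (2 * sigma2) \<le> E / (2 * sigma2)"
      using energy m s2 by (intro divide_right_mono) (auto simp: energy_ok_def)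
    ultimately show ?thesis by linarith
  qed
  have q_sum: "(\<Sum>m\<in>{1..M}. q m) \<le> 1"
    using sum_decoding_events_le[of "words n" Q g "{1..M}"] Q Q_sum by (simp add: q_def A_def)
  have "(\<Sum>m\<in>{1..M}. c m) / real M * ln (real M) \<le> E / (2 * sigma2) + 1 + 1"
    by (rule fano_averaging[OF M _ _ _ q_sum])
       (use per_message P Q in \<open>auto simp: c_def q_def intro: sum_nonneg\<close>)
  moreover have "err_prob sigma2 n M f D g = 1 - (\<Sum>m\<in>{1..M}. c m) / real M"
    unfolding err_prob_eq_one_minus_success[OF M] by (simp add: c_def P_def A_def)
  ultimately show ?thesis by simp
qed

text \<open>Dividing
  the single-code bound by \<open>E\<close> and letting \<open>E \<rightarrow> \<infinity>\<close> gives \<open>R - \<epsilon> \<le> 1/(2\<sigma>\<^sup>2)\<close>.\<close>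

lemma converse_rate_le:
  assumes s2: "sigma2 > 0" and achievable: "achievable_rpue sigma2 R"
  shows "R \<le> 1 / (2 * sigma2)"
proof (rule field_le_epsilon)
  fix eps :: real assume eps: "eps > 0"
  obtain n M f D g where codes: "\<forall>\<^sub>F E in at_top. M E \<ge> 1 \<and> D E \<in> sets borel
        \<and> energy_ok (n E) (M E) (f E) E \<and> ln (real (M E)) / E > R - eps"
    and err: "((\<lambda>E. err_prob sigma2 (n E) (M E) (f E) (D E) (g E)) \<longlongrightarrow> 0) at_top"
    using achievable eps unfolding achievable_rpue_def by blast
  define P where "P E = err_prob sigma2 (n E) (M E) (f E) (D E) (g E)" for E
  have "\<forall>\<^sub>F E in at_top. P E < 1" using order_tendstoD(2)[OF err] by (simp add: P_def)
  hence bound: "\<forall>\<^sub>F E in at_top. (1 - P E) * (R - eps) \<le> 1 / (2 * sigma2) + 2 / E"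
    using codes eventually_gt_at_top[of 0]
  proof eventually_elim
    case (elim E)
    have "(1 - P E) * (R - eps) \<le> (1 - P E) * (ln (real (M E)) / E)"
      using elim by (intro mult_left_mono) auto
    also have "\<dots> = (1 - P E) * ln (real (M E)) / E" by simp
    also have "\<dots> \<le> (E / (2 * sigma2) + 2) / E"
      using converse_code_bound[OF s2, of "D E" "M E" "n E" "f E" E "g E"] elim
      by (intro divide_right_mono) (auto simp: P_def)
    also have "\<dots> = 1 / (2 * sigma2) + 2 / E" using elim by (simp add: field_simps)
    finally show ?case .
  qed
  have lower: "((\<lambda>E. (1 - P E) * (R - eps)) \<longlongrightarrow> (1 - 0) * (R - eps)) at_top"
    using err by (intro tendsto_intros) (simp add: P_def)
  have upper: "((\<lambda>E. 1 / (2 * sigma2) + 2 / E) \<longlongrightarrow> 1 / (2 * sigma2) + 0) at_top"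
    by (intro tendsto_intros tendsto_divide_0[OF tendsto_const]
        filterlim_at_top_imp_at_infinity[OF filterlim_ident])
  have "(1 - 0) * (R - eps) \<le> 1 / (2 * sigma2) + 0"
    by (rule tendsto_le[OF trivial_limit_at_top_linorder upper lower bound])
  thus "R \<le> 1 / (2 * sigma2) + eps" by simp
qed

section \<open>Achievability: pulse-position modulation with a threshold quantizer\<close>

text \<open>The decoder outputs one plus the position of the
  first output 1 (and 0, an invalid message, if there is none).\<close>

definition ppm_enc :: "real \<Rightarrow> nat \<Rightarrow> nat \<Rightarrow> real" where
  "ppm_enc E m k = (if Suc k = m then sqrt E else 0)"

definition ppm_dec :: "bool list \<Rightarrow> nat" where
  "ppm_dec ys = (if \<exists>k<length ys. ys ! k then Suc (LEAST k. ys ! k) else 0)"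

lemma ppm_dec_single:
  assumes "j < length ys" "ys ! j" "\<forall>k<length ys. k \<noteq> j \<longrightarrow> \<not> ys ! k"
  shows "ppm_dec ys = Suc j"
proof -
  have "(LEAST k. ys ! k) = j"
  proof (rule Least_equality)
    fix k assume "ys ! k"
    thus "j \<le> k" using assms by (cases "k < j") auto
  qed (rule assms(2))
  thus ?thesis using assms unfolding ppm_dec_def by auto
qed

lemma ppm_error_event_le:
  fixes P :: real
  assumes "length ys = n" "j < n" "P \<ge> 0"
  shows "(if ppm_dec ys \<noteq> Suc j then P else 0)
    \<le> (if \<not> ys ! j then P else 0) + (\<Sum>k\<in>{..<n} - {j}. if ys ! k then P else 0)"
proof (cases "ppm_dec ys \<noteq> Suc j \<and> ys ! j")
  case True
  then obtain k where k: "k < n" "k \<noteq> j" "ys ! k"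
    using ppm_dec_single[of j ys] assms by auto
  have "(if ys ! k then P else 0) \<le> (\<Sum>k\<in>{..<n} - {j}. if ys ! k then P else 0)"
    by (rule member_le_sum[where f = "\<lambda>k. if ys ! k then P else 0"]) (use k assms in auto)
  thus ?thesis using k True by simp
next
  case False
  have "0 \<le> (\<Sum>k\<in>{..<n} - {j}. if ys ! k then P else 0)" using assms by (intro sum_nonneg) auto
  thus ?thesis using False assms by auto
qed

lemma err_prob_nonneg: "sigma2 > 0 \<Longrightarrow> 0 \<le> err_prob sigma2 n M f D g"
  unfolding err_prob_def
  using out_prob_nonneg by (auto intro!: divide_nonneg_nonneg sum_nonneg)

lemma ppm_error_le:
  assumes s2: "sigma2 > 0" and M: "M \<ge> 1"
  shows "err_prob sigma2 M M (ppm_enc E) D ppm_dec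
    \<le> (1 - p_one sigma2 D (sqrt E)) + real M * p_one sigma2 D 0"
proof -
  let ?p = "p_one sigma2 D"
  define B where "B = (1 - ?p (sqrt E)) + real M * ?p 0"
  have message: "(\<Sum>ys\<in>words M. if ppm_dec ys \<noteq> m then out_prob sigma2 D M (ppm_enc E m) ys else 0) \<le> B"
    if m: "m \<in> {1..M}" for m
  proof -
    define j where "j = m - 1"
    have j: "j < M" "m = Suc j" using m by (auto simp: j_def)
    define a where "a k = bit_law (?p (ppm_enc E m k))" for k
    have a: "a k True + a k False = 1" for k by (simp add: a_def bit_law_def)
    define P where "P = word_prob a M"
    have P: "P ys \<ge> 0" for ys
      unfolding P_def a_def by (rule word_prob_nonneg) (use p_one_bounds[OF s2] in \<open>simp add: bit_law_def\<close>)
    have "(\<Sum>ys\<in>words M. if ppm_dec ys \<noteq> m then P ys else 0)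
        \<le> (\<Sum>ys\<in>words M. (if \<not> ys ! j then P ys else 0) + (\<Sum>k\<in>{..<M} - {j}. if ys ! k then P ys else 0))"
      unfolding j(2) by (intro sum_mono ppm_error_event_le) (use j P in \<open>auto simp: words_def\<close>)
    also have "\<dots> = (\<Sum>ys\<in>words M. if \<not> ys ! j then P ys else 0)
        + (\<Sum>k\<in>{..<M} - {j}. \<Sum>ys\<in>words M. if ys ! k then P ys else 0)"
      by (simp add: sum.distrib sum.swap[of _ "words M"])
    also have "\<dots> = (1 - a j True) + (\<Sum>k\<in>{..<M} - {j}. a k True)"
      unfolding P_def using word_prob_marginal_False[of a j M, OF a j(1)] word_prob_marginal[of a _ M, OF a] by simp
    also have "\<dots> = (1 - ?p (sqrt E)) + (\<Sum>k\<in>{..<M} - {j}. ?p 0)"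
      using j by (intro arg_cong2[where f = "(+)"] sum.cong) (auto simp: a_def bit_law_def ppm_enc_def)
    also have "\<dots> \<le> B"
    proof -
      have "card ({..<M} - {j}) \<le> M" by (metis card_Diff1_le card_lessThan finite_lessThan)
      hence "real (card ({..<M} - {j})) * ?p 0 \<le> real M * ?p 0"
        using p_one_bounds[OF s2] by (intro mult_right_mono) auto
      thus ?thesis by (simp add: B_def)
    qed
    finally show ?thesis unfolding P_def a_def out_prob_eq_word_prob .
  qed
  have "err_prob sigma2 M M (ppm_enc E) D ppm_dec \<le> (1 / real M) * (\<Sum>m\<in>{1..M}. B)"
    unfolding err_prob_def words_def[symmetric] using M by (intro mult_left_mono sum_mono message) auto
  also have "\<dots> = B" using M by simp
  finally show ?thesis by (simp add: B_def)
qed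

lemma exp_mult_tendsto_zero:
  fixes c :: real
  assumes "c < 0"
  shows "((\<lambda>E. exp (c * E)) \<longlongrightarrow> 0) at_top"
proof -
  have "filterlim (\<lambda>E. c * E) at_bot at_top"
    by (rule filterlim_tendsto_neg_mult_at_bot[OF tendsto_const assms filterlim_ident])
  thus ?thesis by (rule filterlim_compose[OF exp_at_bot])
qed

lemma ppm_error_tendsto_zero:
  assumes s2: "sigma2 > 0" and \<beta>: "0 < \<beta>" "\<beta> < 1" and \<alpha>: "\<alpha> < \<beta>\<^sup>2 / (2 * sigma2)"
  shows "((\<lambda>E. err_prob sigma2 (nat \<lceil>exp (\<alpha> * E)\<rceil>) (nat \<lceil>exp (\<alpha> * E)\<rceil>) (ppm_enc E)
              {y. \<beta> * sqrt E \<le> y} ppm_dec) \<longlongrightarrow> 0) at_top"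
    (is "((\<lambda>E. ?err E) \<longlongrightarrow> 0) at_top")
proof -
  define K where "K = 1 / (2 * sigma2)"
  have K: "K > 0" using s2 by (simp add: K_def)
  define c1 where "c1 = - ((1 - \<beta>)\<^sup>2 * K)"
  define c2 where "c2 = \<alpha> - \<beta>\<^sup>2 * K"
  define c3 where "c3 = - (\<beta>\<^sup>2 * K)"
  have c: "c1 < 0" "c2 < 0" "c3 < 0" using \<beta> \<alpha> K by (auto simp: c1_def c2_def c3_def K_def)
  have bound: "?err E \<le> exp (c1 * E) + exp (c2 * E) + exp (c3 * E)" if E: "E \<ge> 0" for E
  proof -
    let ?M = "nat \<lceil>exp (\<alpha> * E)\<rceil>" and ?p = "p_one sigma2 {y. \<beta> * sqrt E \<le> y}"
    have ceil: "0 < \<lceil>exp (\<alpha> * E)\<rceil>" "real_of_int \<lceil>exp (\<alpha> * E)\<rceil> < exp (\<alpha> * E) + 1"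
      using ceiling_correct[of "exp (\<alpha> * E)"] by (auto simp: zero_less_ceiling)
    have M: "?M \<ge> 1" using ceil by linarith
    have M_le: "real ?M \<le> exp (\<alpha> * E) + 1" using ceil by linarith
    have miss: "1 - ?p (sqrt E) \<le> exp (c1 * E)"
      using threshold_miss_le[OF s2 E, of \<beta>] \<beta> by (simp add: c1_def K_def)
    have false_alarm: "?p 0 \<le> exp (c3 * E)"
      using threshold_false_alarm_le[OF s2 E, of \<beta>] \<beta> by (simp add: c3_def K_def)
    have "real ?M * ?p 0 \<le> (exp (\<alpha> * E) + 1) * exp (c3 * E)"
      using M_le false_alarm p_one_bounds[OF s2] by (intro mult_mono) auto
    also have "\<dots> = exp (c2 * E) + exp (c3 * E)"
      by (simp add: distrib_right exp_add[symmetric] c2_def c3_def algebra_simps)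
    finally have false_alarms: "real ?M * ?p 0 \<le> exp (c2 * E) + exp (c3 * E)" .
    have "?err E \<le> (1 - ?p (sqrt E)) + real ?M * ?p 0" by (rule ppm_error_le[OF s2 M])
    also have "\<dots> \<le> exp (c1 * E) + (exp (c2 * E) + exp (c3 * E))" by (rule add_mono[OF miss false_alarms])
    finally show ?thesis by (simp only: add.assoc)
  qed
  have lim: "((\<lambda>E. exp (c1 * E) + exp (c2 * E) + exp (c3 * E)) \<longlongrightarrow> 0 + 0 + 0) at_top"
    using c by (intro tendsto_add exp_mult_tendsto_zero)
  have "\<forall>\<^sub>F E in at_top. ?err E \<le> exp (c1 * E) + exp (c2 * E) + exp (c3 * E)"
    using eventually_ge_at_top[of 0] by eventually_elim (rule bound)
  moreover have "\<forall>\<^sub>F E in at_top. 0 \<le> ?err E" using err_prob_nonneg[OF s2] by simp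
  ultimately show ?thesis using tendsto_sandwich[OF _ _ tendsto_const lim] by simp
qed

text \<open>Given \<open>\<epsilon>\<close>, use PPM at rate
  \<open>\<alpha> = 1/(2\<sigma>\<^sup>2) - \<epsilon>/2\<close> with a threshold factor \<open>\<beta> < 1\<close> close enough to 1.\<close>

lemma achievable_rate:
  assumes s2: "sigma2 > 0"
  shows "achievable_rpue sigma2 (1 / (2 * sigma2))"
  unfolding achievable_rpue_def
proof (intro allI impI)
  fix eps :: real assume eps: "eps > 0"
  define K where "K = 1 / (2 * sigma2)"
  have K: "K > 0" using s2 by (simp add: K_def)
  define \<alpha> where "\<alpha> = K - eps / 2"
  define \<beta> where "\<beta> = sqrt (max (1 / 2) (1 - eps / (4 * K)))"
  have \<beta>2: "\<beta>\<^sup>2 = max (1 / 2) (1 - eps / (4 * K))" by (simp add: \<beta>_def)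
  have \<beta>: "0 < \<beta>" "\<beta> < 1" using eps K by (auto simp: \<beta>_def)
  have "\<alpha> < \<beta>\<^sup>2 * K"
    unfolding \<beta>2 \<alpha>_def using eps K by (auto simp: max_def field_simps)
  hence \<alpha>\<beta>: "\<alpha> < \<beta>\<^sup>2 / (2 * sigma2)" by (simp add: K_def)
  define M where "M E = nat \<lceil>exp (\<alpha> * E)\<rceil>" for E
  define D where "D E = {y. \<beta> * sqrt E \<le> y}" for E
  have codes: "M E \<ge> 1 \<and> D E \<in> sets borel \<and> energy_ok (M E) (M E) (ppm_enc E) E
      \<and> ln (real (M E)) / E > K - eps" if E: "E > 0" for E
  proof (intro conjI)
    show "M E \<ge> 1" by (simp add: M_def Suc_le_eq)
    show "D E \<in> sets borel" unfolding D_def by measurable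
    show "energy_ok (M E) (M E) (ppm_enc E) E"
      unfolding energy_ok_def
    proof
      fix m assume m: "m \<in> {1..M E}"
      have "(\<Sum>k<M E. (ppm_enc E m k)\<^sup>2) = (\<Sum>k<M E. if k = m - 1 then E else 0)"
        using m E by (intro sum.cong) (auto simp: ppm_enc_def)
      also have "\<dots> = E" using m by (simp add: sum.delta) linarith
      finally show "(\<Sum>k<M E. (ppm_enc E m k)\<^sup>2) \<le> E" by simp
    qed
    have "\<alpha> * E \<le> ln (real (M E))"
      using ln_le_cancel_iff[of "exp (\<alpha> * E)" "real (M E)"] by (simp add: M_def)
    hence "\<alpha> \<le> ln (real (M E)) / E" using E by (simp add: field_simps)
    thus "ln (real (M E)) / E > K - eps" using eps by (simp add: \<alpha>_def)
  qed
  show "\<exists>n M f D g. (\<forall>\<^sub>F E in at_top. M E \<ge> 1 \<and> D E \<in> sets borel \<and> energy_ok (n E) (M E) (f E) E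
                          \<and> ln (real (M E)) / E > 1 / (2 * sigma2) - eps)
       \<and> ((\<lambda>E. err_prob sigma2 (n E) (M E) (f E) (D E) (g E)) \<longlongrightarrow> 0) at_top"
    using eventually_mono[OF eventually_gt_at_top[of 0] codes]
      ppm_error_tendsto_zero[OF s2 \<beta> \<alpha>\<beta>]
    by (intro exI[of _ M] exI[of _ ppm_enc] exI[of _ D] exI[of _ "\<lambda>_. ppm_dec"])
       (simp add: K_def M_def D_def)
qed

section \<open>Threshold quantizers attain \<open>1/(2\<sigma>\<^sup>2)\<close>\<close>

lemma threshold_divergence_le:
  assumes s2: "sigma2 > 0" and "\<xi> \<noteq> 0"
  shows "binary_rel_entropy (Qfun ((T - \<xi>) / sqrt sigma2)) (Qfun (T / sqrt sigma2)) / \<xi>\<^sup>2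
    \<le> 1 / (2 * sigma2)"
proof -
  have "binary_rel_entropy (Qfun ((T - \<xi>) / sqrt sigma2)) (Qfun ((T - 0) / sqrt sigma2))
      \<le> (\<xi> - 0)\<^sup>2 / (2 * sigma2)"
    unfolding Qfun_eq_p_one_threshold[OF s2]
    by (rule quantizer_data_processing(1)[OF s2]) measurable
  thus ?thesis using assms by (simp add: divide_le_eq field_simps)
qed

text \<open>Lower bound: with input \<open>\<surd>E\<close> and threshold \<open>\<beta> \<surd>E\<close>, the output 1 is almost certain
  under the input but has probability at most \<open>exp (- \<beta>\<^sup>2 E/(2\<sigma>\<^sup>2))\<close> under the zero input,
  so the divergence is at least about \<open>\<beta>\<^sup>2 E/(2\<sigma>\<^sup>2)\<close>.\<close>

lemma threshold_divergence_ge: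
  assumes s2: "sigma2 > 0" and E: "E > 0" and \<beta>: "0 < \<beta>" "\<beta> < 1"
  shows "(1 - exp (- (1 - \<beta>)\<^sup>2 * E / (2 * sigma2))) * (\<beta>\<^sup>2 * E / (2 * sigma2)) - 1
    \<le> binary_rel_entropy (p_one sigma2 {y. \<beta> * sqrt E \<le> y} (sqrt E)) (p_one sigma2 {y. \<beta> * sqrt E \<le> y} 0)"
proof -
  define D where "D = {y. \<beta> * sqrt E \<le> y}"
  have D: "D \<in> sets borel" unfolding D_def by measurable
  define a where "a = p_one sigma2 D (sqrt E)"
  define b where "b = p_one sigma2 D 0"
  define miss where "miss = exp (- (1 - \<beta>)\<^sup>2 * E / (2 * sigma2))"
  have a_ge: "1 - miss \<le> a"
    using threshold_miss_le[OF s2, of E \<beta>] E \<beta> by (simp add: a_def D_def miss_def)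
  have "miss < 1" using E \<beta> s2 by (simp add: miss_def)
  hence a: "0 < a" "a \<le> 1" using a_ge p_one_bounds[OF s2] by (auto simp: a_def)
  have b: "0 < b" "b \<le> 1" "a < 1 \<longrightarrow> b < 1"
    using quantizer_data_processing(2,3)[OF s2 D, of "sqrt E" 0] p_one_bounds[OF s2] a
    by (auto simp: a_def b_def)
  have "ln b \<le> ln (exp (- \<beta>\<^sup>2 * E / (2 * sigma2)))"
    using threshold_false_alarm_le[OF s2, of E \<beta>] E \<beta> b
    by (subst ln_le_cancel_iff) (auto simp: b_def D_def)
  hence "a * ln b \<le> a * (- (\<beta>\<^sup>2 * E / (2 * sigma2)))" using a by (intro mult_left_mono) auto
  hence "a * (\<beta>\<^sup>2 * E / (2 * sigma2)) \<le> - a * ln b" by simp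
  moreover have "(1 - miss) * (\<beta>\<^sup>2 * E / (2 * sigma2)) \<le> a * (\<beta>\<^sup>2 * E / (2 * sigma2))"
    using a_ge E s2 by (intro mult_right_mono) auto
  moreover have "- a * ln b - 1 \<le> binary_rel_entropy a b" by (rule binary_rel_entropy_ge) (use a b in auto)
  ultimately show ?thesis unfolding miss_def a_def b_def D_def by linarith
qed

text \<open>Hence the supremum over all threshold quantizers equals \<open>1/(2\<sigma>\<^sup>2)\<close>: it is at least
  \<open>\<beta>\<^sup>2/(2\<sigma>\<^sup>2)\<close> for every \<open>\<beta> < 1\<close>, letting \<open>E \<rightarrow> \<infinity>\<close> in the lower bound.\<close>

lemma threshold_sup:
  assumes s2: "sigma2 > 0"
  shows "(SUP p \<in> {p :: real \<times> real. fst p \<noteq> 0}.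
          binary_rel_entropy (Qfun ((snd p - fst p) / sqrt sigma2)) (Qfun (snd p / sqrt sigma2))
            / (fst p)\<^sup>2) = 1 / (2 * sigma2)"
    (is "(SUP p \<in> ?S. ?F p) = ?K")
proof (rule antisym)
  have upper: "?F p \<le> ?K" if "p \<in> ?S" for p
    using threshold_divergence_le[OF s2] that by (cases p) simp
  have bdd: "bdd_above (?F ` ?S)" unfolding bdd_above_def using upper by blast
  show "(SUP p \<in> ?S. ?F p) \<le> ?K"
    using upper by (intro cSUP_least) (auto intro: exI[of _ "(1, 0)"])
  show "?K \<le> (SUP p \<in> ?S. ?F p)"
  proof (rule field_le_mult_one_interval)
    fix z :: real assume z: "0 < z" "z < 1"
    define \<beta> where "\<beta> = sqrt z"
    have \<beta>: "0 < \<beta>" "\<beta> < 1" "\<beta>\<^sup>2 = z" using z by (auto simp: \<beta>_def)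
    define c where "c = - (1 - \<beta>)\<^sup>2 / (2 * sigma2)"
    have c: "c < 0" using \<beta> s2 by (simp add: c_def)
    define g where "g E = (1 - exp (c * E)) * (\<beta>\<^sup>2 / (2 * sigma2)) - 1 / E" for E
    have g_le: "g E \<le> (SUP p \<in> ?S. ?F p)" if E: "E > 0" for E
    proof -
      have "g E = ((1 - exp (- (1 - \<beta>)\<^sup>2 * E / (2 * sigma2))) * (\<beta>\<^sup>2 * E / (2 * sigma2)) - 1) / E"
        using E by (simp add: g_def c_def field_simps)
      also have "\<dots> \<le> ?F (sqrt E, \<beta> * sqrt E)"
        using divide_right_mono[OF threshold_divergence_ge[OF s2 E \<beta>(1,2)], of E] E
          Qfun_eq_p_one_threshold[OF s2, of "\<beta> * sqrt E" 0]
        by (simp add: Qfun_eq_p_one_threshold[OF s2])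
      also have "\<dots> \<le> (SUP p \<in> ?S. ?F p)" using E by (intro cSUP_upper bdd) simp
      finally show ?thesis .
    qed
    have "(g \<longlongrightarrow> (1 - 0) * (\<beta>\<^sup>2 / (2 * sigma2)) - 0) at_top"
      unfolding g_def
      by (intro tendsto_intros exp_mult_tendsto_zero[OF c] tendsto_divide_0[OF tendsto_const]
          filterlim_at_top_imp_at_infinity[OF filterlim_ident])
    moreover have "\<forall>\<^sub>F E in at_top. g E \<le> (SUP p \<in> ?S. ?F p)"
      using eventually_gt_at_top[of 0] by eventually_elim (rule g_le)
    ultimately have "(1 - 0) * (\<beta>\<^sup>2 / (2 * sigma2)) - 0 \<le> (SUP p \<in> ?S. ?F p)"
      by (rule tendsto_le[OF trivial_limit_at_top_linorder tendsto_const])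
    thus "z * ?K \<le> (SUP p \<in> ?S. ?F p)" using \<beta> by simp
  qed
qed

theorem theorem1:
  fixes sigma2 :: real
  assumes "sigma2 > 0"
  shows "capacity_per_unit_energy sigma2 = 1 / (2 * sigma2)
    \<and> (SUP p \<in> {p :: real \<times> real. fst p \<noteq> 0}.
          binary_rel_entropy (Qfun ((snd p - fst p) / sqrt sigma2)) (Qfun (snd p / sqrt sigma2))
            / (fst p)\<^sup>2) = 1 / (2 * sigma2)"
proof
  show "capacity_per_unit_energy sigma2 = 1 / (2 * sigma2)"
    unfolding capacity_per_unit_energy_def
    by (rule cSup_eq_maximum) (use achievable_rate[OF assms] converse_rate_le[OF assms] in auto)
  show "(SUP p \<in> {p :: real \<times> real. fst p \<noteq> 0}.
          binary_rel_entropy (Qfun ((snd p - fst p) / sqrt sigma2)) (Qfun (snd p / sqrt sigma2))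
            / (fst p)\<^sup>2) = 1 / (2 * sigma2)"
    by (rule threshold_sup[OF assms])
qed

end
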